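(* Let $m\le k\le n$ be positive integers, $\mathbf a_1,\dots,\mathbf a_n\in\mathbb R^m$. For a multiset $\mathcal R$ with support in $[n]$ let $f(\mathcal R)=[\det(\sum_{i\in\mathcal R}\mathbf a_i\mathbf a_i^\top)]^{1/m}$ (sum with multiplicity), and let $w^*=\max\{[\det(\sum_{i\in[n]}x_i\mathbf a_i\mathbf a_i^\top)]^{1/m}:\sum_ix_i=k,\ \mathbf x\in\mathbb Z_+^n\}$ be the optimal value of the $D$-optimal design problem with repetitions. Let $\hat{\mathbf x}\in\mathbb Q_+^n$ be a rational optimal solution of the relaxation $\max\{[\det(\sum_{i\in[n]}x_i\mathbf a_i\mathbf a_i^\top)]^{1/m}:\sum_ix_i=k,\ \mathbf x\in\mathbb R_+^n\}$. Algorithm A outputs the random multiset $\mathcal S$ of $k$ independent draws from $[n]$, each equal to $i$ with probability $\hat x_i/k$. Algorithm B, for a positive integer $q$ with $q\hat x_i\in\mathbb Z_+$ for all $i$, forms a collection $\mathcal A_q$ of $qk$ distinct items of which exactly $q\hat x_i$ carry label $i$, chooses a uniformly random $k$-element subset of $\mathcal A_q$, and outputs the multiset $\mathcal S_q$ of labels of the chosen items. Then, for $\mathcal T\in\{\mathcal S,\mathcal S_q\}$: (i) $(\mathbb E[(f(\mathcal T))^m])^{1/m}\ge\frac1e w^*$; (ii) for any $\epsilon\in(0,1)$, if $k\ge\frac{m-1}{\epsilon}$, then $(\mathbb E[(f(\mathcal T))^m])^{1/m}\ge(1-\epsilon)w^*$.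
   Context: $[n]=\{1,\dots,n\}$, $\mathbb Q_+$ the nonnegative rationals, $\mathbb Z_+$ the nonnegative integers, $\mathbb R_+$ the nonnegative reals. *)

theory Defs
  imports "HOL-Analysis.Analysis" "HOL-Probability.Probability"
begin

definition outer :: "real ^ 'm \<Rightarrow> real ^ 'm ^ 'm" where
  "outer v = (\<chi> i j. v $ i * v $ j)"

definition wmat :: "nat \<Rightarrow> (nat \<Rightarrow> real ^ 'm) \<Rightarrow> (nat \<Rightarrow> real) \<Rightarrow> real ^ 'm ^ 'm" where
  "wmat n a x = (\<Sum>i\<in>{1..n}. x i *\<^sub>R outer (a i))"

definition msmat :: "(nat \<Rightarrow> real ^ 'm) \<Rightarrow> nat multiset \<Rightarrow> real ^ 'm ^ 'm" where
  "msmat a R = sum_mset (image_mset (\<lambda>i. outer (a i)) R)"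

definition fval :: "(nat \<Rightarrow> real ^ 'm) \<Rightarrow> nat multiset \<Rightarrow> real" where
  "fval a R = det (msmat a R) powr (1 / real CARD('m))"

definition obj :: "nat \<Rightarrow> (nat \<Rightarrow> real ^ 'm) \<Rightarrow> (nat \<Rightarrow> real) \<Rightarrow> real" where
  "obj n a x = det (wmat n a x) powr (1 / real CARD('m))"

definition wstar :: "nat \<Rightarrow> nat \<Rightarrow> (nat \<Rightarrow> real ^ 'm) \<Rightarrow> real" where
  "wstar n k a = Max ((\<lambda>x. obj n a (\<lambda>i. real (x i))) `
      {x :: nat \<Rightarrow> nat. (\<forall>i. i \<notin> {1..n} \<longrightarrow> x i = 0) \<and> (\<Sum>i\<in>{1..n}. x i) = k})"

definition drawA :: "nat \<Rightarrow> nat \<Rightarrow> (nat \<Rightarrow> real) \<Rightarrow> nat pmf" where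
  "drawA n k xh = embed_pmf (\<lambda>i. if i \<in> {1..n} then xh i / real k else 0)"

definition algA :: "nat \<Rightarrow> nat \<Rightarrow> (nat \<Rightarrow> real) \<Rightarrow> nat multiset pmf" where
  "algA n k xh = map_pmf mset (replicate_pmf k (drawA n k xh))"

definition itemsB :: "nat \<Rightarrow> nat \<Rightarrow> (nat \<Rightarrow> real) \<Rightarrow> (nat \<times> nat) set" where
  "itemsB n q xh = {(i, j). i \<in> {1..n} \<and> j < nat \<lfloor>real q * xh i\<rfloor>}"

definition algB :: "nat \<Rightarrow> nat \<Rightarrow> nat \<Rightarrow> (nat \<Rightarrow> real) \<Rightarrow> nat multiset pmf" where
  "algB n k q xh = map_pmf (\<lambda>T. image_mset fst (mset_set T))
      (pmf_of_set {T. T \<subseteq> itemsB n q xh \<and> card T = k})"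

end

theory Submission
  imports Defs
begin

(* For every multiset R, det (\<Sum>i\<in>R. a i a i\<^sup>T) \<le> f(R)^m, and the expected determinant can be
   computed exactly. Expanding det (\<Sum>s. a s a s\<^sup>T) multilinearly in the rows, only the terms
   whose m rows come from m distinct summands survive, because the summands have rank one.
   For k independent draws with probabilities xh/k this gives
   E det = k (k-1) ... (k-m+1) / k^m * det W,  W = \<Sum>i. xh i a i a i\<^sup>T;
   for a uniform k-subset of the q k items (Cauchy-Binet) every m-subset of items lies in
   C(qk-m, k-m) of the C(qk, k) subsets, which gives a constant at least as large.
   The constant \<Prod>j<m. (1 - j/k) is at least e^-m (compare with m!/m^m) and at least (1-eps)^m
   when k \<ge> (m-1)/eps, while det W^(1/m) \<ge> w* because xh is optimal for the relaxation. *)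

section \<open>Determinants of sums of outer products\<close>

lemma outer_row: "outer v $ i = v $ i *\<^sub>R v"
  by (simp add: outer_def vec_eq_iff)

lemma outer_scaleR: "outer (c *\<^sub>R v) = c\<^sup>2 *\<^sub>R outer v"
  by (simp add: outer_def vec_eq_iff power2_eq_square mult_ac)

lemma det_scaleR: "det (c *\<^sub>R A) = c ^ CARD('n) * det (A :: real^'n::finite^'n)"
proof -
  have "c *\<^sub>R A = (\<chi> i. c *s A $ i)"
    by (simp add: vec_eq_iff scalar_mult_eq_scaleR)
  then show ?thesis by (simp add: det_rows_mul)
qed

lemma det_rows_sum_PiE:
  fixes a :: "'n::finite \<Rightarrow> 'b \<Rightarrow> real^'n"
  assumes "finite S"
  shows "det (\<chi> i. \<Sum>s\<in>S. a i s) = (\<Sum>f\<in>UNIV \<rightarrow>\<^sub>E S. det (\<chi> i. a i (f i)))"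
proof -
  have "det (\<chi> i. \<Sum>s\<in>S. a i s)
      = (\<Sum>p\<in>{p. p permutes UNIV}. of_int (sign p) * (\<Prod>i\<in>UNIV. \<Sum>s\<in>S. a i s $ p i))"
    by (simp add: det_def sum_component)
  also have "\<dots> = (\<Sum>p\<in>{p. p permutes UNIV}. \<Sum>f\<in>UNIV \<rightarrow>\<^sub>E S.
                     of_int (sign p) * (\<Prod>i\<in>UNIV. a i (f i) $ p i))"
    using assms by (simp add: prod_sum_PiE sum_distrib_left)
  also have "\<dots> = (\<Sum>f\<in>UNIV \<rightarrow>\<^sub>E S. det (\<chi> i. a i (f i)))"
    by (subst sum.swap) (simp add: det_def)
  finally show ?thesis .
qed

text \<open>Row \<open>i\<close> of \<open>\<Sum>s. v s v s\<^sup>T\<close> is \<open>\<Sum>s. (v s)\<^sub>i v s\<close>; expanding the determinant row by row,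
  the choice of the summand \<open>u i\<close> in every row \<open>i\<close> contributes \<open>diag_det u\<close>.\<close>
definition diag_det :: "('n::finite \<Rightarrow> real^'n) \<Rightarrow> real" where
  "diag_det u = (\<Prod>i\<in>UNIV. u i $ i) * det (\<chi> i. u i)"

lemma det_sum_outer_expand:
  fixes v :: "'b \<Rightarrow> real^'n::finite"
  assumes "finite T"
  shows "det (\<Sum>s\<in>T. outer (v s)) = (\<Sum>f\<in>UNIV \<rightarrow>\<^sub>E T. diag_det (v \<circ> f))"
proof -
  have "(\<Sum>s\<in>T. outer (v s)) = (\<chi> i. \<Sum>s\<in>T. v s $ i *\<^sub>R v s)"
    by (simp add: vec_eq_iff sum_component outer_row)
  then show ?thesis
    using det_rows_sum_PiE[OF assms, of "\<lambda>i s. v s $ i *\<^sub>R v s"]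
      det_rows_mul[of "\<lambda>i. v (f i) $ i" "\<lambda>i. v (f i)" for f]
    by (simp add: diag_det_def scalar_mult_eq_scaleR)
qed

lemma diag_det_comp_not_inj:
  assumes "\<not> inj f"
  shows "diag_det (v \<circ> f) = 0"
proof -
  from assms obtain i j where "i \<noteq> j" "f i = f j" unfolding inj_def by blast
  then have "det (\<chi> i. (v \<circ> f) i) = 0"
    by (intro det_identical_rows[of i j]) (auto simp: row_def vec_eq_iff)
  then show ?thesis by (simp add: diag_det_def)
qed

lemma sum_permutes_diag_det:
  fixes u :: "'n::finite \<Rightarrow> real^'n"
  shows "(\<Sum>p | p permutes UNIV. diag_det (u \<circ> p)) = det (\<chi> i. u i) ^ 2"
proof -
  let ?A = "(\<chi> i. u i) :: real^'n^'n"
  have "diag_det (u \<circ> p) = of_int (sign p) * (\<Prod>i\<in>UNIV. transpose ?A $ i $ p i) * det ?A"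
    if "p permutes UNIV" for p
    using det_permute_rows[OF that, of ?A] by (simp add: diag_det_def transpose_def)
  then have "(\<Sum>p | p permutes UNIV. diag_det (u \<circ> p)) = det (transpose ?A) * det ?A"
    by (simp add: det_def sum_distrib_right)
  then show ?thesis by (simp add: power2_eq_square)
qed

text \<open>Symmetrising the expansion over permutations of the rows turns it into a sum of
  squared determinants.\<close>
lemma det_sum_outer_nonneg:
  fixes v :: "'b \<Rightarrow> real^'n::finite"
  assumes T: "finite T"
  shows "0 \<le> det (\<Sum>s\<in>T. outer (v s))"
proof -
  let ?F = "(UNIV :: 'n set) \<rightarrow>\<^sub>E T" and ?P = "{p. p permutes (UNIV::'n set)}"
  have perm_inv: "(\<Sum>f\<in>?F. diag_det (v \<circ> f)) = (\<Sum>f\<in>?F. diag_det (v \<circ> f \<circ> p))"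
    if p: "p permutes UNIV" for p
    by (rule sum.reindex_bij_witness[where j="\<lambda>f. f \<circ> inv p" and i="\<lambda>f. f \<circ> p"])
      (auto simp: comp_assoc permutes_inv_o[OF p])
  have "real (card ?P) * det (\<Sum>s\<in>T. outer (v s)) = (\<Sum>p\<in>?P. \<Sum>f\<in>?F. diag_det (v \<circ> f))"
    by (simp add: det_sum_outer_expand[OF T])
  also have "\<dots> = (\<Sum>p\<in>?P. \<Sum>f\<in>?F. diag_det (v \<circ> f \<circ> p))"
    by (rule sum.cong[OF refl]) (simp add: perm_inv)
  also have "\<dots> = (\<Sum>f\<in>?F. det (\<chi> i. (v \<circ> f) i) ^ 2)"
    by (subst sum.swap) (simp only: sum_permutes_diag_det)
  also have "\<dots> \<ge> 0" by (intro sum_nonneg) auto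
  finally have "0 \<le> real (card ?P) * det (\<Sum>s\<in>T. outer (v s))" .
  moreover have "0 < card ?P"
    using card_permutations[of "UNIV::'n set" "CARD('n)"] by simp
  ultimately show ?thesis by (metis of_nat_0_less_iff zero_le_mult_iff not_le)
qed

lemma det_wmat_nonneg:
  assumes "\<forall>i\<in>{1..n}. 0 \<le> x i"
  shows "0 \<le> det (wmat n a x)"
proof -
  have "wmat n a x = (\<Sum>i\<in>{1..n}. outer (sqrt (x i) *\<^sub>R a i))"
    using assms by (simp add: wmat_def outer_scaleR)
  then show ?thesis by (simp add: det_sum_outer_nonneg)
qed

lemma det_msmat_le_fval_pow: "det (msmat a R) \<le> fval a R ^ CARD('n)"
  for a :: "nat \<Rightarrow> real^'n::finite"
proof (cases "det (msmat a R) > 0")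
  case True
  then have "fval a R ^ CARD('n) = det (msmat a R) powr (real CARD('n) * (1 / real CARD('n)))"
    by (simp add: fval_def powr_power)
  then show ?thesis using True by simp
next
  case False
  have "0 \<le> fval a R ^ CARD('n)" by (simp add: fval_def)
  with False show ?thesis by linarith
qed

lemma expectation_det_le_expectation_fval_pow:
  fixes a :: "nat \<Rightarrow> real^'n::finite"
  assumes "finite (set_pmf T)"
  shows "measure_pmf.expectation T (\<lambda>R. det (msmat a R))
       \<le> measure_pmf.expectation T (\<lambda>R. fval a R ^ CARD('n))"
  using assms by (intro integral_mono integrable_measure_pmf_finite det_msmat_le_fval_pow)

section \<open>Sampling with replacement\<close>

definition falling_fact :: "nat \<Rightarrow> nat \<Rightarrow> real" where
  "falling_fact k c = (\<Prod>j<c. real k - real j)"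

lemma falling_fact_eq_choose: "falling_fact k c = real (k choose c) * fact c"
  by (simp add: falling_fact_def binomial_gbinomial gbinomial_mult_fact' atLeast0LessThan)

lemma falling_fact_Suc: "falling_fact (Suc k) c = falling_fact k c + real c * falling_fact k (c - 1)"
proof (cases c)
  case (Suc d)
  then show ?thesis by (simp add: falling_fact_eq_choose algebra_simps)
qed (simp add: falling_fact_def)

lemma det_two_rows_parallel:
  fixes A :: "real^'n::finite^'n"
  assumes ij: "i \<noteq> j" and "A $ i = c *\<^sub>R v" and "A $ j = d *\<^sub>R v"
  shows "det A = 0"
proof -
  define B where "B = (\<chi> l. if l = i \<or> l = j then v else A $ l)"
  define s where "s l = (if l = i then c else if l = j then d else 1)" for l
  have "A = (\<chi> l. s l *s B $ l)"
    using assms by (simp add: vec_eq_iff B_def s_def scalar_mult_eq_scaleR)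
  moreover have "det B = 0"
    by (intro det_identical_rows[OF ij]) (simp add: B_def row_def)
  ultimately show ?thesis by (simp add: det_rows_mul)
qed

text \<open>Only the terms using the rank one part \<open>v\<close> in at most one row survive the multilinear
  expansion, as two rows parallel to \<open>v\<close> make the determinant vanish.\<close>
lemma det_rows_add_rank_one:
  fixes w z :: "'n::finite \<Rightarrow> real^'n"
  shows "det (\<chi> i. if i\<in>J then c i *\<^sub>R v + w i else z i) =
         det (\<chi> i. if i\<in>J then w i else z i) +
         (\<Sum>j\<in>J. det (\<chi> i. if i = j then c j *\<^sub>R v else if i\<in>J then w i else z i))"
proof -
  have "finite J" by simp
  then show ?thesis
  proof (induction J arbitrary: z rule: finite_induct)
    case empty
    then show ?case by simp
  next
    case (insert j J z)
    let ?r = "\<lambda>i. if i\<in>J then c i *\<^sub>R v + w i else z i"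
    have "det (\<chi> i. if i\<in>insert j J then c i *\<^sub>R v + w i else z i) =
          det (\<chi> i. if i = j then c i *\<^sub>R v else ?r i) + det (\<chi> i. if i = j then w i else ?r i)"
      by (subst det_row_add[symmetric]) (intro arg_cong[where f=det] Cart_lambda_cong; auto)
    also have "det (\<chi> i. if i = j then w i else ?r i) =
               det (\<chi> i. if i\<in>J then c i *\<^sub>R v + w i else (z(j := w j)) i)"
      using insert.hyps by (intro arg_cong[where f=det] Cart_lambda_cong) auto
    also have "\<dots> = det (\<chi> i. if i\<in>insert j J then w i else z i) +
         (\<Sum>j'\<in>J. det (\<chi> i. if i = j' then c j' *\<^sub>R v else if i\<in>insert j J then w i else z i))"
      unfolding insert.IH using insert.hyps
      by (intro arg_cong2[where f="(+)"] arg_cong[where f=det] sum.cong refl Cart_lambda_cong) auto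
    also have "det (\<chi> i. if i = j then c i *\<^sub>R v else ?r i) =
               det (\<chi> i. if i\<in>J then c i *\<^sub>R v + w i else (z(j := c j *\<^sub>R v)) i)"
      using insert.hyps by (intro arg_cong[where f=det] Cart_lambda_cong) auto
    also have "\<dots> = det (\<chi> i. if i = j then c j *\<^sub>R v else if i\<in>insert j J then w i else z i)"
    proof -
      have "det (\<chi> i. if i = j' then c j' *\<^sub>R v else if i\<in>J then w i else (z(j := c j *\<^sub>R v)) i) = 0"
        if "j' \<in> J" for j'
        using that insert.hyps by (intro det_two_rows_parallel[of j' j _ "c j'" v "c j"]) auto
      moreover have "det (\<chi> i. if i\<in>J then w i else (z(j := c j *\<^sub>R v)) i) =
           det (\<chi> i. if i = j then c j *\<^sub>R v else if i\<in>insert j J then w i else z i)"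
        using insert.hyps by (intro arg_cong[where f=det] Cart_lambda_cong) auto
      ultimately show ?thesis unfolding insert.IH by simp
    qed
    finally show ?case
      using insert.hyps by (simp add: algebra_simps)
  qed
qed

lemma weighted_det_rows_add_outer:
  fixes a :: "nat \<Rightarrow> real^'n::finite" and w :: "'n \<Rightarrow> real^'n"
  assumes A: "finite A" and px: "(\<Sum>x\<in>A. px x) = 1" and P: "P = (\<Sum>x\<in>A. px x *\<^sub>R outer (a x))"
  shows "(\<Sum>x\<in>A. px x * det (\<chi> i. if i\<in>J then a x $ i *\<^sub>R a x + w i else P $ i)) =
     det (\<chi> i. if i\<in>J then w i else P $ i) + (\<Sum>j\<in>J. det (\<chi> i. if i \<in> J - {j} then w i else P $ i))"
proof -
  let ?c = "\<lambda>i. if i\<in>J then w i else P $ i"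
  have row: "(\<Sum>x\<in>A. px x * det (\<chi> i. if i = j then a x $ j *\<^sub>R a x else ?c i))
             = det (\<chi> i. if i \<in> J - {j} then w i else P $ i)" if "j\<in>J" for j
  proof -
    have "(\<Sum>x\<in>A. px x * det (\<chi> i. if i = j then a x $ j *\<^sub>R a x else ?c i)) =
          (\<Sum>x\<in>A. det (\<chi> i. if i = j then px x *s (a x $ j *\<^sub>R a x) else ?c i))"
      using det_row_mul[of j "px x" "\<lambda>_. a x $ j *\<^sub>R a x" ?c for x] by simp
    also have "\<dots> = det (\<chi> i. if i = j then (\<Sum>x\<in>A. px x *s (a x $ j *\<^sub>R a x)) else ?c i)"
      using det_linear_row_sum[OF A, of j "\<lambda>i x. px x *s (a x $ j *\<^sub>R a x)" ?c] by simp
    also have "(\<Sum>x\<in>A. px x *s (a x $ j *\<^sub>R a x)) = P $ j"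
      by (simp add: P sum_component outer_row scalar_mult_eq_scaleR)
    also have "det (\<chi> i. if i = j then P $ j else ?c i) = det (\<chi> i. if i \<in> J - {j} then w i else P $ i)"
      by (intro arg_cong[where f=det] Cart_lambda_cong) auto
    finally show ?thesis .
  qed
  have "(\<Sum>x\<in>A. px x * det (\<chi> i. if i\<in>J then a x $ i *\<^sub>R a x + w i else P $ i)) =
        (\<Sum>x\<in>A. px x * (det (\<chi> i. if i\<in>J then w i else P $ i) +
           (\<Sum>j\<in>J. det (\<chi> i. if i = j then a x $ j *\<^sub>R a x else ?c i))))"
    using det_rows_add_rank_one[of J "\<lambda>i. a x $ i" "a x" w "\<lambda>i. P $ i" for x] by simp
  also have "\<dots> = (\<Sum>x\<in>A. px x) * det (\<chi> i. if i\<in>J then w i else P $ i) +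
        (\<Sum>j\<in>J. \<Sum>x\<in>A. px x * det (\<chi> i. if i = j then a x $ j *\<^sub>R a x else ?c i))"
    by (simp add: distrib_left sum.distrib sum_distrib_left sum_distrib_right sum.swap[of _ A J])
  also have "\<dots> = det (\<chi> i. if i\<in>J then w i else P $ i) + (\<Sum>j\<in>J. det (\<chi> i. if i \<in> J - {j} then w i else P $ i))"
    using row px by simp
  finally show ?thesis .
qed

lemma finite_set_replicate_pmf:
  assumes "finite (set_pmf p)"
  shows "finite (set_pmf (replicate_pmf k p))"
proof -
  have "set_pmf (replicate_pmf k p) \<subseteq> {xs. set xs \<subseteq> set_pmf p \<and> length xs = k}"
    by (auto simp: set_replicate_pmf)
  then show ?thesis using finite_lists_length_eq[OF assms] finite_subset by blast
qed

text \<open>Replacing the rows in \<open>J\<close> of the mean \<open>P\<close> of \<open>a x a x\<^sup>T\<close> by those of the sum over \<open>k\<close>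
  independent samples multiplies the expected determinant by the falling factorial of \<open>k\<close>:
  by weighted_det_rows_add_outer each new sample either leaves \<open>J\<close> alone or fills exactly one of its rows.\<close>
lemma expectation_det_mixed_rows:
  fixes a :: "nat \<Rightarrow> real^'n::finite" and p :: "nat pmf"
  assumes A: "finite A" and pA: "set_pmf p \<subseteq> A" and P: "P = (\<Sum>x\<in>A. pmf p x *\<^sub>R outer (a x))"
  shows "measure_pmf.expectation (replicate_pmf k p)
           (\<lambda>xs. det (\<chi> i. if i\<in>J then msmat a (mset xs) $ i else P $ i))
         = falling_fact k (card J) * det P"
proof (induction k arbitrary: J)
  case 0
  show ?case
  proof (cases "J = {}")
    case False
    then obtain j where "j \<in> J" by blast
    then have "row j (\<chi> i. if i\<in>J then msmat a (mset []) $ i else P $ i) = 0"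
      by (simp add: row_def msmat_def vec_eq_iff)
    then show ?thesis
      using False by (simp add: det_zero_row falling_fact_def card_gt_0_iff)
  qed (simp add: falling_fact_def)
next
  case (Suc k)
  let ?h = "\<lambda>J xs. det (\<chi> i. if i\<in>J then msmat a (mset xs) $ i else P $ i)"
  let ?E = "measure_pmf.expectation (replicate_pmf k p)"
  have fin: "finite (set_pmf (replicate_pmf k p))"
    using A pA finite_subset finite_set_replicate_pmf by blast
  have int: "integrable (measure_pmf (replicate_pmf k p)) f" for f :: "nat list \<Rightarrow> real"
    by (rule integrable_measure_pmf_finite[OF fin])
  have rep: "replicate_pmf (Suc k) p = p \<bind> (\<lambda>x. map_pmf (Cons x) (replicate_pmf k p))"
    by (simp add: map_pmf_def)
  have "measure_pmf.expectation (replicate_pmf (Suc k) p) (?h J) =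
        (\<Sum>x\<in>A. pmf p x *\<^sub>R measure_pmf.expectation (map_pmf (Cons x) (replicate_pmf k p)) (?h J))"
    unfolding rep by (rule pmf_expectation_bind[OF A _ pA]) (simp add: fin)
  also have "\<dots> = (\<Sum>x\<in>A. pmf p x * ?E (\<lambda>ys. ?h J (x # ys)))"
    by simp
  also have "\<dots> = ?E (\<lambda>ys. \<Sum>x\<in>A. pmf p x * ?h J (x # ys))"
    by (simp add: int)
  also have "\<dots> = ?E (\<lambda>ys. ?h J ys + (\<Sum>j\<in>J. ?h (J - {j}) ys))"
  proof (rule Bochner_Integration.integral_cong[OF refl])
    fix ys
    have "?h J (x # ys) = det (\<chi> i. if i\<in>J then a x $ i *\<^sub>R a x + msmat a (mset ys) $ i else P $ i)"
      for x by (intro arg_cong[where f=det] Cart_lambda_cong) (simp add: msmat_def outer_row)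
    then show "(\<Sum>x\<in>A. pmf p x * ?h J (x # ys)) = ?h J ys + (\<Sum>j\<in>J. ?h (J - {j}) ys)"
      using weighted_det_rows_add_outer[OF A sum_pmf_eq_1[OF A pA] P] by simp
  qed
  also have "\<dots> = ?E (?h J) + (\<Sum>j\<in>J. ?E (?h (J - {j})))"
    by (simp only: Bochner_Integration.integral_add[OF int int] Bochner_Integration.integral_sum[OF int])
  also have "\<dots> = falling_fact k (card J) * det P + (\<Sum>j\<in>J. falling_fact k (card (J - {j})) * det P)"
    by (simp only: Suc.IH)
  also have "\<dots> = (falling_fact k (card J) + real (card J) * falling_fact k (card J - 1)) * det P"
    by (simp add: card_Diff_singleton distrib_right mult.assoc)
  also have "\<dots> = falling_fact (Suc k) (card J) * det P"
    by (simp only: falling_fact_Suc)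
  finally show ?case .
qed

lemma pmf_drawA:
  assumes "0 < k" "\<forall>i\<in>{1..n}. 0 \<le> xh i" "(\<Sum>i\<in>{1..n}. xh i) = real k"
  shows "pmf (drawA n k xh) i = (if i \<in> {1..n} then xh i / real k else 0)"
  unfolding drawA_def
proof (rule pmf_embed_pmf)
  have "(\<integral>\<^sup>+i. ennreal (if i \<in> {1..n} then xh i / real k else 0) \<partial>count_space UNIV)
      = (\<Sum>i\<in>{1..n}. ennreal (if i \<in> {1..n} then xh i / real k else 0))"
    by (rule nn_integral_count_space') auto
  also have "\<dots> = (\<Sum>i\<in>{1..n}. ennreal (xh i / real k))"
    by (rule sum.cong) auto
  also have "\<dots> = ennreal (\<Sum>i\<in>{1..n}. xh i / real k)"
    using assms by (subst sum_ennreal) auto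
  also have "(\<Sum>i\<in>{1..n}. xh i / real k) = 1"
    using assms by (simp flip: sum_divide_distrib)
  finally show "(\<integral>\<^sup>+i. ennreal (if i \<in> {1..n} then xh i / real k else 0) \<partial>count_space UNIV) = 1"
    by simp
qed (use assms in auto)

lemma set_pmf_drawA:
  assumes "0 < k" "\<forall>i\<in>{1..n}. 0 \<le> xh i" "(\<Sum>i\<in>{1..n}. xh i) = real k"
  shows "set_pmf (drawA n k xh) \<subseteq> {1..n}"
  using pmf_drawA[OF assms] by (auto simp: set_pmf_eq split: if_splits)

lemma expectation_det_algA:
  fixes a :: "nat \<Rightarrow> real^'n::finite"
  assumes "0 < k" "\<forall>i\<in>{1..n}. 0 \<le> xh i" "(\<Sum>i\<in>{1..n}. xh i) = real k"
  shows "measure_pmf.expectation (algA n k xh) (\<lambda>R. det (msmat a R))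
       = falling_fact k CARD('n) / real k ^ CARD('n) * det (wmat n a xh)"
proof -
  let ?p = "drawA n k xh"
  have "(1 / real k) *\<^sub>R wmat n a xh = (\<Sum>x\<in>{1..n}. pmf ?p x *\<^sub>R outer (a x))"
    by (simp add: pmf_drawA[OF assms] wmat_def scaleR_sum_right)
  from expectation_det_mixed_rows[OF finite_atLeastAtMost set_pmf_drawA[OF assms] this, of k UNIV]
  have "measure_pmf.expectation (replicate_pmf k ?p) (\<lambda>xs. det (msmat a (mset xs)))
      = falling_fact k CARD('n) * det ((1 / real k) *\<^sub>R wmat n a xh)"
    by simp
  then show ?thesis
    by (simp add: algA_def det_scaleR power_one_over)
qed

lemma finite_set_pmf_algA:
  assumes "0 < k" "\<forall>i\<in>{1..n}. 0 \<le> xh i" "(\<Sum>i\<in>{1..n}. xh i) = real k"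
  shows "finite (set_pmf (algA n k xh))"
  using set_pmf_drawA[OF assms] finite_subset[of _ "{1..n}"]
  by (auto simp: algA_def intro: finite_set_replicate_pmf)

section \<open>Sampling without replacement\<close>

lemma card_supersets:
  assumes I: "finite I" and UI: "U \<subseteq> I" and Uk: "card U \<le> k"
  shows "card {T. T \<subseteq> I \<and> card T = k \<and> U \<subseteq> T} = (card I - card U) choose (k - card U)"
proof -
  have fU: "finite U" using I UI finite_subset by blast
  have "bij_betw (\<lambda>T. T - U) {T. T \<subseteq> I \<and> card T = k \<and> U \<subseteq> T}
                              {T'. T' \<subseteq> I - U \<and> card T' = k - card U}"
  proof (rule bij_betw_byWitness[where f'="\<lambda>T'. T' \<union> U"])
    show "(\<lambda>T. T - U) ` {T. T \<subseteq> I \<and> card T = k \<and> U \<subseteq> T} \<subseteq> {T'. T' \<subseteq> I - U \<and> card T' = k - card U}"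
      using I fU by (auto simp: card_Diff_subset dest: finite_subset)
    show "(\<lambda>T'. T' \<union> U) ` {T'. T' \<subseteq> I - U \<and> card T' = k - card U} \<subseteq> {T. T \<subseteq> I \<and> card T = k \<and> U \<subseteq> T}"
    proof clarify
      fix T' assume T': "T' \<subseteq> I - U" "card T' = k - card U"
      then have "card (T' \<union> U) = card T' + card U"
        using I fU by (intro card_Un_disjoint) (auto dest: finite_subset)
      then show "T' \<union> U \<subseteq> I \<and> card (T' \<union> U) = k \<and> U \<subseteq> T' \<union> U"
        using T' UI Uk by auto
    qed
  qed auto
  then have "card {T. T \<subseteq> I \<and> card T = k \<and> U \<subseteq> T} = card (I - U) choose (k - card U)"
    using I by (simp add: bij_betw_same_card n_subsets)
  then show ?thesis
    using UI fU by (simp add: card_Diff_subset)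
qed

text \<open>Cauchy--Binet counting: each injective term of the expansion of \<open>det (\<Sum>s\<in>T. \<dots>)\<close>
  lives on an \<open>m\<close>-subset of \<open>I\<close>, which lies in exactly \<open>(|I| - m) choose (k - m)\<close> of the
  \<open>k\<close>-subsets \<open>T\<close>.\<close>
lemma sum_subsets_det_sum_outer:
  fixes v :: "'b \<Rightarrow> real^'n::finite"
  assumes I: "finite I" and k: "CARD('n) \<le> k"
  shows "(\<Sum>T | T \<subseteq> I \<and> card T = k. det (\<Sum>s\<in>T. outer (v s)))
         = real ((card I - CARD('n)) choose (k - CARD('n))) * det (\<Sum>s\<in>I. outer (v s))"
proof -
  let ?S = "{T. T \<subseteq> I \<and> card T = k}" and ?F = "(UNIV :: 'n set) \<rightarrow>\<^sub>E I"
  let ?C = "real ((card I - CARD('n)) choose (k - CARD('n)))"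
  have fS: "finite ?S" using I by (simp add: finite_Collect_subsets)
  have fF: "finite ?F" using I by (intro finite_PiE) auto
  have "det (\<Sum>s\<in>T. outer (v s)) = (\<Sum>f\<in>?F. if range f \<subseteq> T then diag_det (v \<circ> f) else 0)"
    if "T \<in> ?S" for T
  proof -
    have fT: "finite T" using that I finite_subset by blast
    have "UNIV \<rightarrow>\<^sub>E T = {f \<in> ?F. range f \<subseteq> T}"
      using that by (auto simp: PiE_UNIV_domain)
    then show ?thesis
      unfolding det_sum_outer_expand[OF fT] by (simp add: sum.inter_filter[OF fF])
  qed
  then have "(\<Sum>T\<in>?S. det (\<Sum>s\<in>T. outer (v s)))
      = (\<Sum>f\<in>?F. \<Sum>T\<in>?S. if range f \<subseteq> T then diag_det (v \<circ> f) else 0)"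
    by (simp add: sum.swap[of _ ?S])
  also have "\<dots> = (\<Sum>f\<in>?F. ?C * diag_det (v \<circ> f))"
  proof (rule sum.cong[OF refl])
    fix f assume f: "f \<in> ?F"
    have "(\<Sum>T\<in>?S. if range f \<subseteq> T then diag_det (v \<circ> f) else 0)
        = real (card {T \<in> ?S. range f \<subseteq> T}) * diag_det (v \<circ> f)"
      by (simp add: sum.inter_filter[OF fS, symmetric])
    also have "\<dots> = ?C * diag_det (v \<circ> f)"
    proof (cases "inj f")
      case True
      then have "card (range f) = CARD('n)" by (simp add: card_image)
      moreover have "range f \<subseteq> I" using f by (auto simp: PiE_UNIV_domain)
      moreover have "{T \<in> ?S. range f \<subseteq> T} = {T. T \<subseteq> I \<and> card T = k \<and> range f \<subseteq> T}" by auto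
      ultimately show ?thesis
        using card_supersets[OF I, of "range f" k] k by simp
    qed (simp add: diag_det_comp_not_inj)
    finally show "(\<Sum>T\<in>?S. if range f \<subseteq> T then diag_det (v \<circ> f) else 0) = ?C * diag_det (v \<circ> f)" .
  qed
  also have "\<dots> = ?C * det (\<Sum>s\<in>I. outer (v s))"
    by (simp add: det_sum_outer_expand[OF I] sum_distrib_left)
  finally show ?thesis .
qed

lemma itemsB_eq_Sigma: "itemsB n q xh = (SIGMA i:{1..n}. {..<nat \<lfloor>real q * xh i\<rfloor>})"
  by (auto simp: itemsB_def)

lemma itemsB_counts:
  fixes a :: "nat \<Rightarrow> real^'n::finite"
  assumes "(\<Sum>i\<in>{1..n}. xh i) = real k" and "\<forall>i\<in>{1..n}. \<exists>c::nat. real q * xh i = real c"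
  shows "card (itemsB n q xh) = q * k"
    and "(\<Sum>s\<in>itemsB n q xh. outer (a (fst s))) = real q *\<^sub>R wmat n a xh"
proof -
  have cnt: "real (nat \<lfloor>real q * xh i\<rfloor>) = real q * xh i" if "i \<in> {1..n}" for i
    using assms(2) that by force
  have "real (card (itemsB n q xh)) = (\<Sum>i\<in>{1..n}. real q * xh i)"
    by (simp add: itemsB_eq_Sigma card_SigmaI cnt)
  also have "\<dots> = real (q * k)"
    using assms(1) by (simp add: sum_distrib_left[symmetric])
  finally show "card (itemsB n q xh) = q * k"
    by (simp only: of_nat_eq_iff)
  have "(\<Sum>s\<in>itemsB n q xh. outer (a (fst s))) = (\<Sum>i\<in>{1..n}. \<Sum>j<nat \<lfloor>real q * xh i\<rfloor>. outer (a i))"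
    unfolding itemsB_eq_Sigma by (subst sum.Sigma) (auto simp: split_beta)
  also have "\<dots> = (\<Sum>i\<in>{1..n}. (real q * xh i) *\<^sub>R outer (a i))"
    by (intro sum.cong refl) (simp add: sum_constant_scaleR cnt del: sum_constant)
  finally show "(\<Sum>s\<in>itemsB n q xh. outer (a (fst s))) = real q *\<^sub>R wmat n a xh"
    by (simp add: wmat_def scaleR_sum_right)
qed

lemma card_subsets_itemsB:
  assumes "(\<Sum>i\<in>{1..n}. xh i) = real k" and "\<forall>i\<in>{1..n}. \<exists>c::nat. real q * xh i = real c"
  shows "card {T. T \<subseteq> itemsB n q xh \<and> card T = k} = (q * k) choose k"
  using n_subsets[of "itemsB n q xh" k] itemsB_counts(1)[OF assms] by (simp add: itemsB_eq_Sigma)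

lemma expectation_det_algB:
  fixes a :: "nat \<Rightarrow> real^'n::finite"
  assumes "CARD('n) \<le> k" "0 < q" "(\<Sum>i\<in>{1..n}. xh i) = real k"
    and "\<forall>i\<in>{1..n}. \<exists>c::nat. real q * xh i = real c"
  shows "measure_pmf.expectation (algB n k q xh) (\<lambda>R. det (msmat a R))
    = real ((q * k - CARD('n)) choose (k - CARD('n))) * real q ^ CARD('n) / real ((q * k) choose k)
      * det (wmat n a xh)"
proof -
  let ?I = "itemsB n q xh"
  let ?S = "{T. T \<subseteq> ?I \<and> card T = k}"
  have fI: "finite ?I" by (simp add: itemsB_eq_Sigma)
  have fS: "finite ?S" using fI by (simp add: finite_Collect_subsets)
  note cardS = card_subsets_itemsB[OF assms(3,4)]
  then have "0 < card ?S" using assms(2) by simp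
  then have "?S \<noteq> {}" by (metis card.empty less_irrefl)
  then have "measure_pmf.expectation (algB n k q xh) (\<lambda>R. det (msmat a R))
      = (\<Sum>T\<in>?S. det (msmat a (image_mset fst (mset_set T)))) / card ?S"
    by (simp add: algB_def integral_pmf_of_set[OF _ fS])
  also have "\<dots> = (\<Sum>T\<in>?S. det (\<Sum>s\<in>T. outer (a (fst s)))) / card ?S"
    by (simp add: msmat_def multiset.map_comp sum_unfold_sum_mset comp_def)
  also have "\<dots> = real ((q * k - CARD('n)) choose (k - CARD('n))) * det (real q *\<^sub>R wmat n a xh)
      / real ((q * k) choose k)"
    using sum_subsets_det_sum_outer[OF fI assms(1), of "\<lambda>s. a (fst s)"]
      itemsB_counts(1)[OF assms(3,4)] itemsB_counts(2)[OF assms(3,4), where a=a]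
    by (simp add: cardS)
  finally show ?thesis
    by (simp add: det_scaleR)
qed

lemma finite_set_pmf_algB:
  assumes "0 < q" "(\<Sum>i\<in>{1..n}. xh i) = real k" "\<forall>i\<in>{1..n}. \<exists>c::nat. real q * xh i = real c"
  shows "finite (set_pmf (algB n k q xh))"
proof -
  let ?S = "{T. T \<subseteq> itemsB n q xh \<and> card T = k}"
  have "0 < card ?S" using card_subsets_itemsB[OF assms(2,3)] assms(1) by simp
  then show ?thesis
    by (simp add: algB_def card_gt_0_iff)
qed

section \<open>The approximation constants\<close>

lemma power_div_fact_le_exp:
  assumes "0 \<le> (x::real)"
  shows "x ^ n / fact n \<le> exp x"
proof -
  have s: "(\<lambda>n. x ^ n /\<^sub>R fact n) sums exp x" by (rule exp_converges)
  have "(\<Sum>i\<in>{n}. x ^ i /\<^sub>R fact i) \<le> (\<Sum>n. x ^ n /\<^sub>R fact n)"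
    using assms by (intro sum_le_suminf[OF sums_summable[OF s]]) auto
  then show ?thesis using sums_unique[OF s] by (simp add: divide_inverse mult.commute)
qed

lemma falling_fact_ratio_eq_prod:
  "falling_fact k m / real k ^ m = (\<Prod>j<m. (real k - real j) / real k)"
  by (simp add: falling_fact_def prod_dividef)

text \<open>The factor \<open>\<Prod>j<m. (k - j) / k\<close> increases in \<open>k \<ge> m\<close>, and at \<open>k = m\<close> it is
  \<open>m! / m\<^sup>m \<ge> e\<^sup>-\<^sup>m\<close>.\<close>
lemma exp_pow_le_falling_fact_ratio:
  assumes mk: "m \<le> k"
  shows "(1 / exp 1) ^ m \<le> falling_fact k m / real k ^ m"
proof (cases "m = 0")
  case False
  have "(\<Prod>j<m. (real m - real j) / real m) \<le> (\<Prod>j<m. (real k - real j) / real k)"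
  proof (rule prod_mono)
    fix j assume "j \<in> {..<m}"
    moreover have "real k * (real m - real j) \<le> real m * (real k - real j)"
      using mk by (simp add: algebra_simps mult_left_mono)
    ultimately show "0 \<le> (real m - real j) / real m \<and> (real m - real j) / real m \<le> (real k - real j) / real k"
      using mk False by (auto simp: field_simps)
  qed
  moreover have "fact m / real m ^ m = (\<Prod>j<m. (real m - real j) / real m)"
    using falling_fact_ratio_eq_prod[of m m] by (simp add: falling_fact_eq_choose)
  ultimately have "fact m / real m ^ m \<le> falling_fact k m / real k ^ m"
    by (simp only: falling_fact_ratio_eq_prod)
  moreover have "real m ^ m \<le> exp (real m) * fact m"
    using power_div_fact_le_exp[of "real m" m] by (simp add: pos_divide_le_eq)
  then have "(1 / exp 1) ^ m \<le> fact m / real m ^ m"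
    using False by (simp add: power_one_over field_simps flip: exp_of_nat_mult)
  ultimately show ?thesis by linarith
qed (simp add: falling_fact_def)

lemma one_minus_pow_le_falling_fact_ratio:
  assumes mk: "m \<le> k" and \<epsilon>: "0 < \<epsilon>" "\<epsilon> < 1" and k: "(real m - 1) / \<epsilon> \<le> real k"
  shows "(1 - \<epsilon>) ^ m \<le> falling_fact k m / real k ^ m"
proof (cases "m = 0")
  case False
  then have k0: "0 < k" using mk by simp
  have "1 - \<epsilon> \<le> (real k - (real m - 1)) / real k"
    using k \<epsilon> k0 by (simp add: field_simps pos_divide_le_eq)
  then have "(1 - \<epsilon>) ^ m \<le> (\<Prod>j<m. (real k - (real m - 1)) / real k)"
    using \<epsilon> by (simp add: power_mono)
  also have "\<dots> \<le> (\<Prod>j<m. (real k - real j) / real k)"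
    using mk k0 by (intro prod_mono) (auto simp: divide_right_mono)
  finally show ?thesis
    by (simp only: falling_fact_ratio_eq_prod)
qed (simp add: falling_fact_def)

text \<open>The right-hand side is the constant of sampling without replacement from \<open>q k\<close> items.\<close>
lemma falling_fact_ratio_le_without_replacement:
  assumes mk: "m \<le> k" and q: "0 < q"
  shows "falling_fact k m / real k ^ m
    \<le> real ((q * k - m) choose (k - m)) * real q ^ m / real ((q * k) choose k)"
proof -
  let ?N = "q * k"
  have kN: "k \<le> ?N" using q by simp
  have "falling_fact k m * real (?N choose k) = real ((?N choose m) * fact m) * real ((?N - m) choose (k - m))"
    using arg_cong[OF choose_mult[OF mk kN], of real] by (simp add: falling_fact_eq_choose algebra_simps)
  also have "\<dots> \<le> real (?N ^ m) * real ((?N - m) choose (k - m))"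
    by (intro mult_right_mono of_nat_mono binomial_fact_pow) simp
  finally have "falling_fact k m * real (?N choose k) \<le> real ((?N - m) choose (k - m)) * real q ^ m * real k ^ m"
    by (simp add: power_mult_distrib mult_ac)
  moreover have "0 < real k ^ m" "0 < real (?N choose k)"
    using mk q kN by (auto simp: zero_less_binomial_iff)
  ultimately show ?thesis
    by (simp add: field_simps)
qed

section \<open>From the expected determinant to the optimum\<close>

lemma wstar_le_obj:
  assumes n: "1 \<le> n"
    and opt: "\<forall>x :: nat \<Rightarrow> real. (\<forall>i\<in>{1..n}. 0 \<le> x i) \<and> (\<Sum>i\<in>{1..n}. x i) = real k
                \<longrightarrow> obj n a x \<le> obj n a xh"
  shows "wstar n k a \<le> obj n a xh"
proof -
  let ?X = "{x :: nat \<Rightarrow> nat. (\<forall>i. i \<notin> {1..n} \<longrightarrow> x i = 0) \<and> (\<Sum>i\<in>{1..n}. x i) = k}"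
  have "x i \<le> k" if "x \<in> ?X" "i \<in> {1..n}" for x i
  proof -
    have "x i \<le> (\<Sum>i\<in>{1..n}. x i)" using that(2) by (intro member_le_sum) auto
    then show ?thesis using that(1) by simp
  qed
  then have "?X \<subseteq> {x. \<forall>i. (i \<in> {1..n} \<longrightarrow> x i \<in> {0..k}) \<and> (i \<notin> {1..n} \<longrightarrow> x i = 0)}"
    by auto
  then have fin: "finite ?X"
    using finite_set_of_finite_funs[of "{1..n}" "{0..k}" 0] finite_subset by blast
  have "(\<Sum>i\<in>{1..n}. if i = 1 then k else 0) = k"
    using n by (simp add: sum.delta)
  then have "(\<lambda>i. if i = 1 then k else 0) \<in> ?X"
    using n by simp
  then have ne: "?X \<noteq> {}" by (metis empty_iff)
  have le: "obj n a (\<lambda>i. real (x i)) \<le> obj n a xh" if "x \<in> ?X" for x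
  proof -
    from that have "real (\<Sum>i\<in>{1..n}. x i) = real k" by simp
    then have "(\<Sum>i\<in>{1..n}. real (x i)) = real k" by (simp only: of_nat_sum)
    then show ?thesis using opt by simp
  qed
  show ?thesis
    unfolding wstar_def
  proof (rule Max.boundedI)
    show "finite ((\<lambda>x. obj n a (\<lambda>i. real (x i))) ` ?X)" using fin by (rule finite_imageI)
    show "(\<lambda>x. obj n a (\<lambda>i. real (x i))) ` ?X \<noteq> {}" using ne by simp
  next
    fix y assume "y \<in> (\<lambda>x. obj n a (\<lambda>i. real (x i))) ` ?X"
    then obtain x where "x \<in> ?X" and "y = obj n a (\<lambda>i. real (x i))" by (rule imageE)
    then show "y \<le> obj n a xh" using le by simp
  qed
qed

lemma mult_le_root_if_pow_mult_le:
  fixes c d e w :: real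
  assumes m: "0 < m" and c: "0 < c" and d: "0 \<le> d" and cde: "c ^ m * d \<le> e"
    and w: "w \<le> d powr (1 / real m)"
  shows "c * w \<le> e powr (1 / real m)"
proof -
  have "c * w \<le> c * d powr (1 / real m)"
    using w c by simp
  also have "\<dots> = (c ^ m) powr (1 / real m) * d powr (1 / real m)"
    using c m by (simp add: powr_realpow[symmetric] powr_powr)
  also have "\<dots> = (c ^ m * d) powr (1 / real m)"
    using c d by (simp add: powr_mult)
  also have "\<dots> \<le> e powr (1 / real m)"
    using cde c d by (intro powr_mono2) auto
  finally show ?thesis .
qed

lemma expectation_fval_pow_ge:
  fixes a :: "nat \<Rightarrow> real^'n::finite"
  assumes mk: "CARD('n) \<le> k" and xh_nonneg: "\<forall>i\<in>{1..n}. 0 \<le> xh i"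
    and xh_sum: "(\<Sum>i\<in>{1..n}. xh i) = real k"
    and q_pos: "0 < q" and q_int: "\<forall>i\<in>{1..n}. \<exists>c::nat. real q * xh i = real c"
    and T: "T \<in> {algA n k xh, algB n k q xh}"
  shows "falling_fact k CARD('n) / real k ^ CARD('n) * det (wmat n a xh)
       \<le> measure_pmf.expectation T (\<lambda>R. fval a R ^ CARD('n))"
proof -
  have "0 < CARD('n)" by simp
  with mk have k: "0 < k" by linarith
  have "falling_fact k CARD('n) / real k ^ CARD('n) * det (wmat n a xh)
      \<le> measure_pmf.expectation T (\<lambda>R. det (msmat a R))"
  proof (cases "T = algA n k xh")
    case True
    then show ?thesis
      by (simp only: expectation_det_algA[OF k xh_nonneg xh_sum])
  next
    case False
    with T have "T = algB n k q xh" by simp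
    then show ?thesis
      by (simp only: expectation_det_algB[OF mk q_pos xh_sum q_int])
        (rule mult_right_mono[OF falling_fact_ratio_le_without_replacement[OF mk q_pos]
              det_wmat_nonneg[OF xh_nonneg]])
  qed
  also have "\<dots> \<le> measure_pmf.expectation T (\<lambda>R. fval a R ^ CARD('n))"
    using T finite_set_pmf_algA[OF k xh_nonneg xh_sum] finite_set_pmf_algB[OF q_pos xh_sum q_int]
    by (auto intro: expectation_det_le_expectation_fval_pow)
  finally show ?thesis .
qed

theorem theorem5:
  fixes a :: "nat \<Rightarrow> real ^ 'm" and n k q :: nat and xh :: "nat \<Rightarrow> real"
  assumes mk: "CARD('m) \<le> k" and kn: "k \<le> n"
    and xh_rat: "\<forall>i\<in>{1..n}. xh i \<in> \<rat>"
    and xh_nonneg: "\<forall>i\<in>{1..n}. 0 \<le> xh i"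
    and xh_sum: "(\<Sum>i\<in>{1..n}. xh i) = real k"
    and xh_opt: "\<forall>x :: nat \<Rightarrow> real. (\<forall>i\<in>{1..n}. 0 \<le> x i) \<and> (\<Sum>i\<in>{1..n}. x i) = real k
                   \<longrightarrow> obj n a x \<le> obj n a xh"
    and q_pos: "0 < q"
    and q_int: "\<forall>i\<in>{1..n}. \<exists>c :: nat. real q * xh i = real c"
  shows "\<forall>T \<in> {algA n k xh, algB n k q xh}.
     (measure_pmf.expectation T (\<lambda>R. fval a R ^ CARD('m))) powr (1 / real CARD('m))
        \<ge> (1 / exp 1) * wstar n k a
   \<and> (\<forall>\<epsilon>::real. 0 < \<epsilon> \<and> \<epsilon> < 1 \<and> real k \<ge> (real CARD('m) - 1) / \<epsilon> \<longrightarrow>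
        (measure_pmf.expectation T (\<lambda>R. fval a R ^ CARD('m))) powr (1 / real CARD('m))
          \<ge> (1 - \<epsilon>) * wstar n k a)"
proof -
  (* xh_rat is implied by q_int and not needed. *)
  let ?m = "CARD('m)" and ?W = "wmat n a xh"
  let ?\<gamma> = "falling_fact k ?m / real k ^ ?m"
  let ?E = "\<lambda>T. measure_pmf.expectation T (\<lambda>R. fval a R ^ ?m)"
  have "0 < ?m" by simp
  with mk have k: "0 < k" by linarith
  have W: "0 \<le> det ?W" using xh_nonneg by (rule det_wmat_nonneg)
  have "1 \<le> n" using k kn by linarith
  from wstar_le_obj[OF this xh_opt]
  have w: "wstar n k a \<le> det ?W powr (1 / real ?m)" unfolding obj_def .
  have root: "c * wstar n k a \<le> ?E T powr (1 / real ?m)"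
    if T: "T \<in> {algA n k xh, algB n k q xh}" and c: "0 < c" "c ^ ?m \<le> ?\<gamma>" for T c
  proof -
    have "c ^ ?m * det ?W \<le> ?E T"
      using mult_right_mono[OF c(2) W] expectation_fval_pow_ge[OF mk xh_nonneg xh_sum q_pos q_int T, where a=a]
      by linarith
    from mult_le_root_if_pow_mult_le[OF _ c(1) W this w] show ?thesis by simp
  qed
  show ?thesis
  proof (intro ballI conjI allI impI)
    fix T assume T: "T \<in> {algA n k xh, algB n k q xh}"
    have "0 < 1 / exp (1::real)" by simp
    from root[OF T this exp_pow_le_falling_fact_ratio[OF mk]]
    show "(1 / exp 1) * wstar n k a \<le> ?E T powr (1 / real ?m)" .
    fix \<epsilon> :: real assume \<epsilon>: "0 < \<epsilon> \<and> \<epsilon> < 1 \<and> (real ?m - 1) / \<epsilon> \<le> real k"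
    then have "(1 - \<epsilon>) ^ ?m \<le> ?\<gamma>"
      using one_minus_pow_le_falling_fact_ratio[OF mk] by blast
    moreover have "0 < 1 - \<epsilon>" using \<epsilon> by simp
    ultimately show "(1 - \<epsilon>) * wstar n k a \<le> ?E T powr (1 / real ?m)"
      using root[OF T] by blast
  qed
qed

end
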